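(* Let $h$ be sufficiently small and $T$ an interface element (curve or line variant). For arbitrary points $\overline X_i\in l$, $i\in\mathcal I$, define for $s=\pm$ and $X\in T_p^s$ $$\boldsymbol\Lambda_s(X)=\sum_{i\in\mathcal I}(M_i-X)\phi^s_{i,T}(X)+\sum_{i\in\mathcal I^{s'}}(\overline M^s(F)-I)^T(M_i-\overline X_i)\phi^s_{i,T}(X)+\sum_{i\in\mathcal I^{int}}\frac1{|b_i|}\int_{b_i\cap T^{s'}}(\overline M^s(F)-I)^T(P-\overline X_i)\,ds(P)\,\phi^s_{i,T}(X),$$ and $\boldsymbol\Lambda=\boldsymbol\Lambda_+$ on $T_p^+$, $\boldsymbol\Lambda=(\overline M^+(F))^T\boldsymbol\Lambda_-$ on $T_p^-$. Then $\boldsymbol\Lambda\in[S_h^{int}(T)]^2$ and $\int_{b_i}\boldsymbol\Lambda\,ds=\mathbf 0$ for every $i\in\mathcal I$.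
   Context: Standard setting. $\Omega\subset\mathbb R^2$ is a bounded domain that is a finite union of rectangles, separated by a curve $\Gamma$ into open subdomains $\Omega^+,\Omega^-$ with $\overline\Omega=\overline{\Omega^+}\cup\overline{\Omega^-}\cup\Gamma$; $\beta^\pm>0$ are constants and $\rho=\beta^-/\beta^+$. $\mathcal T_h$ is a Cartesian mesh of $\Omega$ made either of rectangles or of triangles (Cartesian rectangles cut along a diagonal), with maximal edge length $h$. An element $T$ is an interface element if its interior meets $\Gamma$. The mesh satisfies: (H1) $\Gamma$ does not intersect an edge of any element at more than two points unless the edge is part of $\Gamma$; (H2) if $\Gamma$ meets the boundary of an element at two points, they lie on different edges; (H3) $\Gamma$ is piecewise $C^2$ and $\Gamma\cap T$ is $C^2$ for every interface element $T$; (H4) $PC^2_{int}(T)$ is dense in $PH^2_{int}(T)$ for every interface element $T$. On an interface element $T$, $D,E$ are the two points of $\Gamma\cap\partial T$, $l$ is the segment $DE$, $\bar{\mathbf n}=(\bar n_x,\bar n_y)^T$ is a unit normal to $l$, and $T^\pm=T\cap\Omega^\pm$. IFE setting. Let $T$ be an interface element with edges $b_i$, $i\in\mathcal I=\{1,\dots,N\}$ ($N=3$ for triangles, $N=4$ for rectangles) and midpoints $M_i$ of $b_i$. $\Pi_T=\mathrm{span}\{1,x,y\}$ (Crouzeix–Raviart, triangles) or $\Pi_T=\mathrm{span}\{1,x,y,x^2-y^2\}$ (rotated-$Q_1$, rectangles). Set $\mathcal I^s=\{i:b_i\subseteq\overline{T^s}\}$, $\mathcal I^{int}=\{i: b_i\cap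 T^+\ne\emptyset\text{ and }b_i\cap T^-\ne\emptyset\}$ ($s=\pm$); $s'$ denotes the sign opposite to $s$. One of two variants is fixed: (curve) a point $F\in\Gamma\cap T$, $F\neq D,E$, $\mathbf v(F)=\mathbf n(F)$ the unit normal to $\Gamma$ at $F$ oriented so that $\bar{\mathbf n}\cdot\mathbf n(F)>0$, and $T_p^\pm=T^\pm$; (line) a point $F\in l$, $\mathbf v(F)=\bar{\mathbf n}$, and $T_p^\pm$ are the two parts into which $l$ cuts $T$, $T_p^s$ being the one on the same side of $l$ as $\partial T\cap \overline{T^s}$. An IFE function on $T$ is a function $\phi_T$ with $\phi_T|_{T_p^s}=\phi_T^s$, $\phi_T^s\in\Pi_T$ ($s=\pm$), satisfying (J1) $\phi_T^-=\phi_T^+$ on $l$, and additionally $\partial_{xx}\phi_T^-=\partial_{xx}\phi_T^+$ in the rotated-$Q_1$ case; (J2) $\beta^-\nabla\phi_T^-(F)\cdot\mathbf v(F)=\beta^+\nabla\phi_T^+(F)\cdot\mathbf v(F)$. $S_h^{int}(T)$ denotes the linear space of IFE functions on $T$, and $\phi_{i,T}$, $i\in\mathcal I$, are the IFE functions with $\frac1{|b_j|}\int_{b_j}\phi_{i,T}\,ds=\delta_{ij}$ (they exist and are unique for $h$ small enough); $\phi^s_{i,T}\in\Pi_T$ is the polynomial piece of $\phi_{i,T}$ on $T^s_p$, regarded as a polynomial on all of $\mathbb R^2$. With $\mathbf v(F)=(v_x,v_y)^T$ and $r_s=\beta^s/\beta^{s'}$, $$\overline M^s(F)=\frac{1}{\bar{\mathbf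 n}\cdot\mathbf v(F)}\begin{pmatrix}\bar n_yv_y+r_s\bar n_xv_x & (r_s-1)\bar n_xv_y\\ (r_s-1)\bar n_yv_x & \bar n_xv_x+r_s\bar n_yv_y\end{pmatrix}.$$ *)

theory Defs
  imports "HOL-Analysis.Analysis"
begin

datatype sgn = Pos | Neg

fun opp :: "sgn \<Rightarrow> sgn" where
  "opp Pos = Neg" | "opp Neg = Pos"

definition pt :: "real \<Rightarrow> real \<Rightarrow> real^2" where
  "pt a b = vector [a, b]"

(* An element of Pi_T, given by its coordinates (a,b,c,d) w.r.t. the basis
   1, x, y, x^2-y^2 (d = 0 in the Crouzeix-Raviart / triangle case). *)
type_synonym poly2 = "real \<times> real \<times> real \<times> real"

definition peval :: "poly2 \<Rightarrow> real^2 \<Rightarrow> real" where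
  "peval p X = (case p of (a, b, c, d) \<Rightarrow>
      a + b * X$1 + c * X$2 + d * ((X$1)^2 - (X$2)^2))"

definition pgrad :: "poly2 \<Rightarrow> real^2 \<Rightarrow> real^2" where
  "pgrad p X = (case p of (a, b, c, d) \<Rightarrow> pt (b + 2 * d * X$1) (c - 2 * d * X$2))"

definition pdxx :: "poly2 \<Rightarrow> real" where
  "pdxx p = (case p of (a, b, c, d) \<Rightarrow> 2 * d)"

definition PiT :: "bool \<Rightarrow> poly2 set" where
  "PiT is_rect = {(a, b, c, d). is_rect \<or> d = 0}"

(* Element: Cartesian rectangle [x0,x0+hx] x [y0,y0+hy] (rect = True), or the
   triangle obtained by removing corner number cutc (0..3) of it (rect = False). *)
record cfg =
  rect :: bool
  cutc :: nat
  x0 :: real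
  y0 :: real
  hx :: real
  hy :: real
  Om :: "sgn \<Rightarrow> (real^2) set"
  Gam :: "(real^2) set"
  bp :: real
  bm :: real
  Dp :: "real^2"
  Ep :: "real^2"
  nb :: "real^2"
  curve :: bool                    (* True: curve variant, False: line variant *)
  Fp :: "real^2"
  vF :: "real^2"

definition corner :: "cfg \<Rightarrow> nat \<Rightarrow> real^2" where
  "corner C j = (if j = 0 then pt (x0 C) (y0 C)
     else if j = 1 then pt (x0 C + hx C) (y0 C)
     else if j = 2 then pt (x0 C + hx C) (y0 C + hy C)
     else pt (x0 C) (y0 C + hy C))"

definition NN :: "cfg \<Rightarrow> nat" where
  "NN C = (if rect C then 4 else 3)"

(* vertices, numbered cyclically; edge b_i joins V i and V (i+1) *)
definition V :: "cfg \<Rightarrow> nat \<Rightarrow> real^2" where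
  "V C i = (if rect C then corner C (i mod 4) else corner C ((cutc C + 1 + i mod 3) mod 4))"

definition edge :: "cfg \<Rightarrow> nat \<Rightarrow> (real^2) set" where
  "edge C i = closed_segment (V C i) (V C (Suc i))"

definition mid :: "cfg \<Rightarrow> nat \<Rightarrow> real^2" where
  "mid C i = midpoint (V C i) (V C (Suc i))"

definition elen :: "cfg \<Rightarrow> nat \<Rightarrow> real" where
  "elen C i = dist (V C i) (V C (Suc i))"

definition Tset :: "cfg \<Rightarrow> (real^2) set" where
  "Tset C = convex hull (V C ` {..<NN C})"

definition Tsg :: "cfg \<Rightarrow> sgn \<Rightarrow> (real^2) set" where
  "Tsg C s = Tset C \<inter> Om C s"

definition Tp :: "cfg \<Rightarrow> sgn \<Rightarrow> (real^2) set" where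
  "Tp C s = (if curve C then Tsg C s
     else {X \<in> Tset C. \<exists>Q \<in> frontier (Tset C) \<inter> closure (Tsg C s).
             (nb C \<bullet> (X - Dp C)) * (nb C \<bullet> (Q - Dp C)) > 0})"

definition seg_int :: "real^2 \<Rightarrow> real^2 \<Rightarrow> (real^2 \<Rightarrow> 'a::euclidean_space) \<Rightarrow> 'a" where
  "seg_int A B f = dist A B *\<^sub>R integral {0..1} (\<lambda>t. f (A + t *\<^sub>R (B - A)))"

definition edge_avg :: "cfg \<Rightarrow> nat \<Rightarrow> (real^2 \<Rightarrow> real) \<Rightarrow> real" where
  "edge_avg C j f = seg_int (V C j) (V C (Suc j)) f / elen C j"

(* IFE conditions (J1), (J2) on a pair of polynomial pieces q Pos, q Neg *)
definition is_ife :: "cfg \<Rightarrow> (sgn \<Rightarrow> poly2) \<Rightarrow> bool" where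
  "is_ife C q \<longleftrightarrow> q Pos \<in> PiT (rect C) \<and> q Neg \<in> PiT (rect C)
     \<and> (\<forall>X \<in> closed_segment (Dp C) (Ep C). peval (q Neg) X = peval (q Pos) X)
     \<and> (rect C \<longrightarrow> pdxx (q Neg) = pdxx (q Pos))
     \<and> bm C * (pgrad (q Neg) (Fp C) \<bullet> vF C) = bp C * (pgrad (q Pos) (Fp C) \<bullet> vF C)"

definition ife_fun :: "cfg \<Rightarrow> (sgn \<Rightarrow> poly2) \<Rightarrow> real^2 \<Rightarrow> real" where
  "ife_fun C q X = (if X \<in> Tp C Pos then peval (q Pos) X else peval (q Neg) X)"

definition Sint :: "cfg \<Rightarrow> (real^2 \<Rightarrow> real) \<Rightarrow> bool" where
  "Sint C f \<longleftrightarrow> (\<exists>q. is_ife C q \<and> (\<forall>s. \<forall>X \<in> Tp C s. f X = peval (q s) X))"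

definition Iset :: "cfg \<Rightarrow> sgn \<Rightarrow> nat set" where
  "Iset C s = {i. i < NN C \<and> edge C i \<subseteq> closure (Tsg C s)}"

definition Iint :: "cfg \<Rightarrow> nat set" where
  "Iint C = {i. i < NN C \<and> edge C i \<inter> Tsg C Pos \<noteq> {} \<and> edge C i \<inter> Tsg C Neg \<noteq> {}}"

definition Mbar :: "cfg \<Rightarrow> sgn \<Rightarrow> real^2^2" where
  "Mbar C s = (let r = (if s = Pos then bp C / bm C else bm C / bp C);
       nx = nb C $ 1; ny = nb C $ 2; vx = vF C $ 1; vy = vF C $ 2 in
     (1 / (nb C \<bullet> vF C)) *\<^sub>R
       (vector [vector [ny * vy + r * nx * vx, (r - 1) * nx * vy],
                vector [(r - 1) * ny * vx, nx * vx + r * ny * vy]] :: real^2^2))"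

definition Lam_s :: "cfg \<Rightarrow> (nat \<Rightarrow> sgn \<Rightarrow> poly2) \<Rightarrow> (nat \<Rightarrow> real^2) \<Rightarrow> sgn \<Rightarrow> real^2 \<Rightarrow> real^2" where
  "Lam_s C phi Xb s X =
     (\<Sum>i<NN C. peval (phi i s) X *\<^sub>R (mid C i - X))
   + (\<Sum>i\<in>Iset C (opp s). peval (phi i s) X *\<^sub>R
        (transpose (Mbar C s - mat 1) *v (mid C i - Xb i)))
   + (\<Sum>i\<in>Iint C. peval (phi i s) X *\<^sub>R ((1 / elen C i) *\<^sub>R
        seg_int (V C i) (V C (Suc i))
          (\<lambda>P. (indicator (Tsg C (opp s)) P :: real) *\<^sub>R
                 (transpose (Mbar C s - mat 1) *v (P - Xb i)))))"

definition Lam :: "cfg \<Rightarrow> (nat \<Rightarrow> sgn \<Rightarrow> poly2) \<Rightarrow> (nat \<Rightarrow> real^2) \<Rightarrow> real^2 \<Rightarrow> real^2" where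
  "Lam C phi Xb X = (if X \<in> Tp C Pos then Lam_s C phi Xb Pos X
                     else transpose (Mbar C Pos) *v Lam_s C phi Xb Neg X)"

end

theory Submission
  imports Defs
begin

text \<open>By (J1) the jump of an IFE function across $l$ is a multiple of $\bar{\mathbf n}\cdot(X-D)$, and
  (J2) fixes the multiple, so an IFE function is determined by its $+$ piece and its edge averages are
  linear functionals of that piece. The dual basis $\phi_{i,T}$ makes them unisolvent, so every IFE
  function is interpolated by its edge averages. Interpolating the constant $1$ and the IFE functions
  whose $s$ piece is a coordinate of $X-D$ gives $\sum_i\phi^s_{i,T}=1$ and
  $X-D=\sum_i\phi^s_{i,T}(X)\,A^s_i$, with $A^s_i$ the edge averages of those functions. Since
  $(\overline M^s(F)-I)^T$ is the rank-one map $y\mapsto c_s(\bar{\mathbf n}\cdot y)\,\mathbf v(F)$ and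
  $\bar{\mathbf n}\cdot(P-\overline X_i)=\bar{\mathbf n}\cdot(P-D)$, the last two sums in $\boldsymbol\Lambda_s$
  add up to $\sum_i\phi^s_{i,T}(X)(A^s_i-(M_i-D))$, hence $\boldsymbol\Lambda_s\equiv 0$. So
  $\boldsymbol\Lambda\equiv 0$, which trivially lies in $[S_h^{int}(T)]^2$ and has vanishing edge
  integrals.\<close>

lemma inner_real2: "(x::real^2) \<bullet> y = x$1 * y$1 + x$2 * y$2"
  by (simp add: inner_vec_def sum_2)

lemma vec2_eq_iff: "(x::real^2) = y \<longleftrightarrow> x$1 = y$1 \<and> x$2 = y$2"
  by (simp add: vec_eq_iff forall_2)

lemma pt_nth [simp]: "pt a b $ 1 = a" "pt a b $ 2 = b"
  by (simp_all add: pt_def)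

lemma opp_opp [simp]: "opp (opp s) = s"
  by (cases s) auto

lemma perp_eq_scaleR_unit:
  fixes u n w :: "real^2"
  assumes "u \<bullet> w = 0" "n \<bullet> w = 0" "w \<noteq> 0" "norm n = 1"
  shows "u = (u \<bullet> n) *\<^sub>R n"
proof -
  have n: "(n$1)^2 + (n$2)^2 = 1"
    using assms(4) by (simp add: norm_eq_1 inner_real2 power2_eq_square)
  have "(u$1 * n$2 - u$2 * n$1) * w$1 = 0" "(u$1 * n$2 - u$2 * n$1) * w$2 = 0"
    using assms(1,2) unfolding inner_real2 by algebra+
  then have cross: "u$1 * n$2 - u$2 * n$1 = 0"
    using assms(3) by (auto simp: vec2_eq_iff)
  have e1: "u$1 - (u \<bullet> n) * n$1 = n$2 * (u$1 * n$2 - u$2 * n$1)"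
    and e2: "u$2 - (u \<bullet> n) * n$2 = n$1 * (u$2 * n$1 - u$1 * n$2)"
    using n by (simp_all add: inner_real2 algebra_simps power2_eq_square) algebra+
  have "u$1 - (u \<bullet> n) * n$1 = 0" "u$2 - (u \<bullet> n) * n$2 = 0"
    unfolding e1 e2 using cross by simp_all
  then show ?thesis
    by (simp add: vec2_eq_iff)
qed

subsection \<open>The matrix $\overline M^s(F)$\<close>

definition beta_ratio :: "cfg \<Rightarrow> sgn \<Rightarrow> real" where
  "beta_ratio C s = (if s = Pos then bp C / bm C else bm C / bp C)"

definition mbar_coeff :: "cfg \<Rightarrow> sgn \<Rightarrow> real" where
  "mbar_coeff C s = (beta_ratio C s - 1) / (nb C \<bullet> vF C)"

lemma transpose_Mbar_minus_id:
  assumes "nb C \<bullet> vF C \<noteq> 0"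
  shows "transpose (Mbar C s - mat 1) *v y = (mbar_coeff C s * (nb C \<bullet> y)) *\<^sub>R vF C"
proof -
  define N where "N = nb C \<bullet> vF C"
  have N: "N = nb C $ 1 * vF C $ 1 + nb C $ 2 * vF C $ 2" "N \<noteq> 0"
    using assms by (simp_all add: N_def inner_real2)
  have "transpose (Mbar C s - mat 1) = (\<chi> i j. mbar_coeff C s * vF C $ i * nb C $ j)"
    using N unfolding vec_eq_iff forall_2
    by (simp add: Mbar_def mbar_coeff_def beta_ratio_def Let_def transpose_def mat_def
        N_def[symmetric] field_simps)
  then show ?thesis
    by (simp add: vec_eq_iff forall_2 matrix_vector_mult_def sum_2 inner_real2 algebra_simps)
qed

lemma peval_add: "peval (p + q) X = peval p X + peval q X"
  by (cases p; cases q) (simp add: peval_def algebra_simps)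

lemma peval_scaleR: "peval (c *\<^sub>R p) X = c * peval p X"
  by (cases p) (simp add: peval_def algebra_simps)

lemma linear_peval: "linear (\<lambda>p. peval p X)"
  by (rule linearI) (simp_all add: peval_add peval_scaleR)

lemma peval_sum: "peval (sum f S) X = (\<Sum>i\<in>S. peval (f i) X)"
  using linear_sum[OF linear_peval, of f S X] by (simp add: o_def)

lemma pdxx_add: "pdxx (p + q) = pdxx p + pdxx q"
  by (cases p; cases q) (simp add: pdxx_def)

lemma pdxx_scaleR: "pdxx (c *\<^sub>R p) = c * pdxx p"
  by (cases p) (simp add: pdxx_def)

lemma linear_pdxx: "linear pdxx"
  by (intro linearI) (simp_all add: pdxx_add pdxx_scaleR)

lemma pdxx_PiT: "p \<in> PiT False \<Longrightarrow> pdxx p = 0"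
  by (auto simp: PiT_def pdxx_def)

lemma pgrad_add: "pgrad (p + q) X = pgrad p X + pgrad q X"
  by (cases p; cases q) (simp add: pgrad_def vec2_eq_iff algebra_simps)

lemma pgrad_scaleR: "pgrad (c *\<^sub>R p) X = c *\<^sub>R pgrad p X"
  by (cases p) (simp add: pgrad_def vec2_eq_iff algebra_simps)

lemma continuous_on_peval [continuous_intros]:
  "continuous_on S f \<Longrightarrow> continuous_on S (\<lambda>t. peval p (f t))"
  by (cases p) (auto simp: peval_def intro!: continuous_intros)

definition lin_poly :: "real^2 \<Rightarrow> real^2 \<Rightarrow> poly2" where
  "lin_poly w P = (- (w \<bullet> P), w$1, w$2, 0)"

lemma peval_lin_poly [simp]: "peval (lin_poly w P) X = w \<bullet> (X - P)"
  by (simp add: lin_poly_def peval_def inner_real2 algebra_simps)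

lemma pgrad_lin_poly [simp]: "pgrad (lin_poly w P) X = w"
  by (simp add: lin_poly_def pgrad_def vec2_eq_iff)

lemma lin_poly_in_PiT [simp]: "lin_poly w P \<in> PiT b"
  by (simp add: lin_poly_def PiT_def)

lemma pdxx_lin_poly [simp]: "pdxx (lin_poly w P) = 0"
  by (simp add: lin_poly_def pdxx_def)

subsection \<open>An IFE function is determined by its $+$ piece\<close>

definition jump_coeff :: "cfg \<Rightarrow> poly2 \<Rightarrow> real" where
  "jump_coeff C p = (bp C - bm C) * (pgrad p (Fp C) \<bullet> vF C) / (bm C * (nb C \<bullet> vF C))"

definition ife_piece :: "cfg \<Rightarrow> sgn \<Rightarrow> poly2 \<Rightarrow> poly2" where
  "ife_piece C s p = (if s = Pos then p else p + jump_coeff C p *\<^sub>R lin_poly (nb C) (Dp C))"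

lemma linear_jump_coeff: "linear (jump_coeff C)"
  by (rule linearI) (simp_all add: jump_coeff_def pgrad_add pgrad_scaleR inner_add_left
      add_divide_distrib distrib_left)

lemma linear_ife_piece: "linear (ife_piece C s)"
  using linear_jump_coeff[of C]
  by (intro linearI) (simp_all add: ife_piece_def linear_add linear_scale scaleR_add_left algebra_simps)

text \<open>By (J1) the jump $\phi^- - \phi^+$ vanishes at $D$ and $E$ and has no $x^2-y^2$ part, so it is
  a multiple of $\bar{\mathbf n}\cdot(X-D)$; (J2) then fixes the multiple.\<close>

lemma is_ife_eq_ife_piece:
  assumes bm: "bm C > 0" and nv: "nb C \<bullet> vF C \<noteq> 0" and DE: "Dp C \<noteq> Ep C"
    and perp: "nb C \<bullet> (Ep C - Dp C) = 0" and nn: "norm (nb C) = 1" and q: "is_ife C q"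
  shows "q s = ife_piece C s (q Pos)"
proof (cases s)
  case Neg
  obtain a b c d where qp: "q Pos = (a, b, c, d)" by (cases "q Pos") auto
  obtain a' b' c' d' where qn: "q Neg = (a', b', c', d')" by (cases "q Neg") auto
  have "d' = d"
    using q by (cases "rect C") (auto simp: is_ife_def qp qn pdxx_def PiT_def)
  define w where "w = pt (b' - b) (c' - c)"
  have jump: "peval (q Neg) X - peval (q Pos) X = (a' - a) + w \<bullet> X" for X
    by (simp add: qp qn \<open>d' = d\<close> peval_def inner_real2 w_def algebra_simps)
  have "peval (q Neg) X = peval (q Pos) X" if "X \<in> {Dp C, Ep C}" for X
    using q that by (auto simp: is_ife_def)
  then have a: "a' - a = - (w \<bullet> Dp C)" and "w \<bullet> (Ep C - Dp C) = 0"
    using jump[of "Dp C"] jump[of "Ep C"] by (auto simp: inner_diff_right)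
  then have w: "w = (w \<bullet> nb C) *\<^sub>R nb C"
    using DE perp nn by (intro perp_eq_scaleR_unit) auto
  have a': "a' - a = - (w \<bullet> nb C) * (nb C \<bullet> Dp C)"
    using a arg_cong[OF w, of "\<lambda>v. v \<bullet> Dp C"] by simp
  have "pgrad (q Neg) (Fp C) = pgrad (q Pos) (Fp C) + w"
    by (simp add: qp qn \<open>d' = d\<close> pgrad_def w_def vec2_eq_iff)
  then have "bm C * ((pgrad (q Pos) (Fp C) + w) \<bullet> vF C) = bp C * (pgrad (q Pos) (Fp C) \<bullet> vF C)"
    using q by (simp add: is_ife_def)
  then have "w \<bullet> nb C = jump_coeff C (q Pos)"
    using bm nv by (subst (asm) w) (simp add: jump_coeff_def inner_add_left field_simps)
  moreover have "b' - b = (w \<bullet> nb C) * nb C $ 1" "c' - c = (w \<bullet> nb C) * nb C $ 2"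
    using arg_cong[OF w, of "\<lambda>v. v $ 1"] arg_cong[OF w, of "\<lambda>v. v $ 2"] by (simp_all add: w_def)
  ultimately have "q Neg = q Pos + jump_coeff C (q Pos) *\<^sub>R lin_poly (nb C) (Dp C)"
    using a' \<open>d' = d\<close> by (simp add: qp qn lin_poly_def algebra_simps)
  then show ?thesis
    using Neg by (simp add: ife_piece_def)
qed (simp add: ife_piece_def)

subsection \<open>Geometry of the element\<close>

lemma NN_pos: "0 < NN C"
  by (simp add: NN_def)

lemma V_mod_NN: "V C (i mod NN C) = V C i"
  by (simp add: V_def NN_def)

lemma V_in_vertices: "V C i \<in> V C ` {..<NN C}"
  by (metis V_mod_NN NN_pos image_eqI lessThan_iff mod_less_divisor)

lemma convex_Tset: "convex (Tset C)"
  by (simp add: Tset_def)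

lemma compact_Tset: "compact (Tset C)"
  by (simp add: Tset_def compact_convex_hull finite_imp_compact)

lemma edge_subset_Tset: "edge C i \<subseteq> Tset C"
  unfolding edge_def Tset_def
  by (intro closed_segment_subset_convex_hull hull_inc V_in_vertices)

definition edge_normal :: "cfg \<Rightarrow> nat \<Rightarrow> real^2" where
  "edge_normal C i = pt (V C (Suc i) $ 2 - V C i $ 2) (V C i $ 1 - V C (Suc i) $ 1)"

lemma edge_normal_orthogonal: "edge_normal C i \<bullet> (V C (Suc i) - V C i) = 0"
  by (simp add: edge_normal_def inner_real2 algebra_simps)

lemma edge_normal_inner_edge:
  assumes "X \<in> edge C i" shows "edge_normal C i \<bullet> (X - V C i) = 0"
proof -
  obtain u where "X - V C i = u *\<^sub>R (V C (Suc i) - V C i)"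
    using assms by (auto simp: edge_def in_segment algebra_simps)
  then show ?thesis
    by (simp add: edge_normal_orthogonal)
qed

locale cart_element =
  fixes C :: cfg
  assumes hx_pos: "hx C > 0" and hy_pos: "hy C > 0" and cutc_less: "cutc C < 4"
begin

lemma V_neq_V_Suc: "V C i \<noteq> V C (Suc i)"
proof (cases "rect C")
  case True
  have "i mod 4 = 0 \<or> i mod 4 = 1 \<or> i mod 4 = 2 \<or> i mod 4 = 3" "Suc i mod 4 = Suc (i mod 4) mod 4"
    by (auto simp: mod_Suc)
  then show ?thesis
    using True hx_pos hy_pos by (elim disjE; simp add: V_def corner_def vec2_eq_iff)
next
  case False
  have "i mod 3 = 0 \<or> i mod 3 = 1 \<or> i mod 3 = 2" "Suc i mod 3 = Suc (i mod 3) mod 3"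
    "cutc C = 0 \<or> cutc C = 1 \<or> cutc C = 2 \<or> cutc C = 3"
    using cutc_less by (auto simp: mod_Suc)
  then show ?thesis
    using False hx_pos hy_pos by (elim disjE; simp add: V_def corner_def vec2_eq_iff)
qed

lemma elen_pos: "elen C i > 0"
  using V_neq_V_Suc by (simp add: elen_def)

lemma edge_normal_neq_0: "edge_normal C i \<noteq> 0"
  using V_neq_V_Suc[of i] by (auto simp: edge_normal_def vec2_eq_iff)

lemma edge_normal_vertex:
  assumes "i < NN C" "j < NN C"
  shows "edge_normal C i \<bullet> (V C j - V C i) \<le> 0"
    and "edge_normal C i \<bullet> (V C j - V C i) = 0 \<Longrightarrow> j = i \<or> j = Suc i mod NN C"
proof -
  have "edge_normal C i \<bullet> (V C j - V C i) \<le> 0 \<and>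
    (edge_normal C i \<bullet> (V C j - V C i) = 0 \<longrightarrow> j = i \<or> j = Suc i mod NN C)"
  proof (cases "rect C")
    case True
    then have "i = 0 \<or> i = 1 \<or> i = 2 \<or> i = 3" "j = 0 \<or> j = 1 \<or> j = 2 \<or> j = 3"
      using assms by (auto simp: NN_def)
    then show ?thesis
      using True hx_pos hy_pos
      by (elim disjE; simp add: NN_def edge_normal_def V_def corner_def inner_real2)
  next
    case False
    then have "i = 0 \<or> i = 1 \<or> i = 2" "j = 0 \<or> j = 1 \<or> j = 2"
      "cutc C = 0 \<or> cutc C = 1 \<or> cutc C = 2 \<or> cutc C = 3"
      using assms cutc_less by (auto simp: NN_def)
    then show ?thesis
      using False hx_pos hy_pos
      by (elim disjE; simp add: NN_def edge_normal_def V_def corner_def inner_real2)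
  qed
  then show "edge_normal C i \<bullet> (V C j - V C i) \<le> 0"
    and "edge_normal C i \<bullet> (V C j - V C i) = 0 \<Longrightarrow> j = i \<or> j = Suc i mod NN C"
    by auto
qed

lemma Tset_subset_halfplane:
  assumes "i < NN C"
  shows "Tset C \<subseteq> {X. edge_normal C i \<bullet> X \<le> edge_normal C i \<bullet> V C i}"
  unfolding Tset_def
  using edge_normal_vertex(1)[OF assms]
  by (intro hull_minimal) (auto simp: convex_halfspace_le inner_diff_right)

lemma edge_subset_frontier:
  assumes i: "i < NN C"
  shows "edge C i \<subseteq> frontier (Tset C)"
proof
  fix X assume X: "X \<in> edge C i"
  let ?w = "edge_normal C i"
  have "X \<notin> interior (Tset C)"
  proof
    assume "X \<in> interior (Tset C)"
    then obtain e where e: "e > 0" "ball X e \<subseteq> Tset C"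
      by (auto simp: mem_interior)
    define Y where "Y = X + (e / 2 / norm ?w) *\<^sub>R ?w"
    have "Y \<in> Tset C"
      using e edge_normal_neq_0 by (intro subsetD[OF e(2)]) (simp add: Y_def dist_norm)
    then have "?w \<bullet> (Y - V C i) \<le> 0"
      using Tset_subset_halfplane[OF i] by (auto simp: inner_diff_right)
    moreover have "?w \<bullet> (Y - V C i) = (e / 2 / norm ?w) * (?w \<bullet> ?w)"
      using edge_normal_inner_edge[OF X]
      by (simp add: Y_def algebra_simps inner_diff_right inner_add_right)
    moreover have "(e / 2 / norm ?w) * (?w \<bullet> ?w) > 0"
      using e edge_normal_neq_0 by simp
    ultimately show False
      by linarith
  qed
  moreover have "X \<in> Tset C"
    using X edge_subset_Tset by blast
  ultimately show "X \<in> frontier (Tset C)"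
    using closure_subset by (auto simp: frontier_def)
qed

text \<open>$T$ meets the line of $b_i$ in a face of the polygon, which is spanned by vertices of $b_i$.\<close>

lemma on_edge_line_imp_edge:
  assumes i: "i < NN C" and X: "X \<in> Tset C" "edge_normal C i \<bullet> (X - V C i) = 0"
  shows "X \<in> edge C i"
proof -
  let ?H = "{X. edge_normal C i \<bullet> X = edge_normal C i \<bullet> V C i}"
  have "(Tset C \<inter> ?H) face_of convex hull (V C ` {..<NN C})"
    using face_of_Int_supporting_hyperplane_le[OF convex_Tset,
        where a = "edge_normal C i" and b = "edge_normal C i \<bullet> V C i"]
      Tset_subset_halfplane[OF i]
    by (auto simp: Tset_def)
  then obtain S where S: "S \<subseteq> V C ` {..<NN C}" "Tset C \<inter> ?H = convex hull S"
    using face_of_convex_hull_subset[of "V C ` {..<NN C}"] by (auto simp: finite_imp_compact)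
  have "S \<subseteq> {V C i, V C (Suc i)}"
  proof
    fix Y assume Y: "Y \<in> S"
    then obtain j where j: "j < NN C" "Y = V C j"
      using S(1) by auto
    have "Y \<in> Tset C \<inter> ?H"
      using hull_inc[OF Y] S(2) by simp
    then have "j = i \<or> j = Suc i mod NN C"
      using edge_normal_vertex(2)[OF i j(1)] j(2) by (simp add: inner_diff_right)
    then show "Y \<in> {V C i, V C (Suc i)}"
      using j V_mod_NN by auto
  qed
  then have "Tset C \<inter> ?H \<subseteq> edge C i"
    unfolding S(2) edge_def segment_convex_hull by (rule hull_mono)
  then show ?thesis
    using X by (auto simp: inner_diff_right)
qed

end

subsection \<open>Integrals along the edges\<close>

abbreviation edge_path :: "cfg \<Rightarrow> nat \<Rightarrow> real \<Rightarrow> real^2" where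
  "edge_path C i \<equiv> linepath (V C i) (V C (Suc i))"

lemma edge_path_in_edge: "t \<in> {0..1} \<Longrightarrow> edge_path C i t \<in> edge C i"
  using linepath_image_01 unfolding edge_def by blast

lemma seg_int_linepath: "seg_int A B f = dist A B *\<^sub>R integral {0..1} (\<lambda>t. f (linepath A B t))"
  by (simp add: seg_int_def linepath_def algebra_simps)

lemma (in cart_element) edge_avg_eq_integral:
  "edge_avg C i f = integral {0..1} (\<lambda>t. f (edge_path C i t))"
  using elen_pos[of i] by (simp add: edge_avg_def seg_int_linepath elen_def)

lemma integral_lin_poly_linepath:
  "integral {0..1} (\<lambda>t. peval (lin_poly w P) (linepath A B t)) = w \<bullet> (midpoint A B - P)"
proof -
  have eq: "peval (lin_poly w P) (linepath A B t) = w \<bullet> (A - P) + t * (w \<bullet> (B - A))" for t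
    by (simp add: linepath_def inner_add_right inner_diff_right algebra_simps)
  have "integral {0..1} (\<lambda>t. w \<bullet> (A - P) + t * (w \<bullet> (B - A))) = w \<bullet> (A - P) + w \<bullet> (B - A) / 2"
    by (subst integral_add) (auto intro!: integrable_continuous_real continuous_intros)
  also have "\<dots> = w \<bullet> (midpoint A B - P)"
    by (simp add: midpoint_def inner_add_right inner_diff_right field_simps)
  finally show ?thesis
    by (simp only: eq)
qed

lemma integrable_indicator_open_mult:
  fixes p :: "real \<Rightarrow> 'a::topological_space" and f :: "real \<Rightarrow> real"
  assumes U: "open U" and p: "continuous_on UNIV p" and f: "continuous_on {0..1} f"
  shows "(\<lambda>t. indicator U (p t) * f t) integrable_on {0..1}"
proof -
  have "p -` U \<in> sets lebesgue"
    using open_vimage[OF U p] by auto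
  then have "p -` U \<inter> {0..1} \<in> sets (lebesgue_on {0..1::real})"
    by (simp add: sets_restrict_space_iff sets.Int)
  then have "(indicator (p -` U) :: real \<Rightarrow> real) \<in> borel_measurable (lebesgue_on {0..1})"
    by (subst borel_measurable_indicator_iff) (simp add: space_restrict_space Int_commute)
  then have "(\<lambda>t. indicator (p -` U) t * f t) absolutely_integrable_on {0..1}"
  proof (rule absolutely_integrable_bounded_measurable_product_real)
    show "bounded ((indicator (p -` U) :: real \<Rightarrow> real) ` {0..1})"
      by (rule bounded_subset[OF finite_imp_bounded[of "{0, 1}"]]) (auto simp: indicator_def)
  qed (use f absolutely_integrable_continuous_real in auto)
  then show ?thesis
    by (simp add: set_lebesgue_integral_eq_integral(1) indicator_vimage)
qed

text \<open>\<open>side_moment C s i\<close> is $\frac1{|b_i|}\int_{b_i\cap T^{s'}}\bar{\mathbf n}\cdot(P-D)\,ds(P)$.\<close>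

definition side_moment :: "cfg \<Rightarrow> sgn \<Rightarrow> nat \<Rightarrow> real" where
  "side_moment C s i = integral {0..1} (\<lambda>t. indicator (Tsg C (opp s)) (edge_path C i t)
                                          * (nb C \<bullet> (edge_path C i t - Dp C)))"

definition edge_avg_poly :: "cfg \<Rightarrow> nat \<Rightarrow> poly2 \<Rightarrow> real" where
  "edge_avg_poly C i p = integral {0..1} (\<lambda>t. peval p (edge_path C i t))
                         + jump_coeff C p * side_moment C Pos i"

lemma linear_edge_avg_poly: "linear (edge_avg_poly C i)"
proof (rule linearI)
  fix p q :: poly2 and c :: real
  have "integral {0..1} (\<lambda>t. peval (p + q) (edge_path C i t))
      = integral {0..1} (\<lambda>t. peval p (edge_path C i t)) + integral {0..1} (\<lambda>t. peval q (edge_path C i t))"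
    unfolding peval_add
    by (rule integral_add) (auto intro: integrable_continuous_real continuous_intros)
  then show "edge_avg_poly C i (p + q) = edge_avg_poly C i p + edge_avg_poly C i q"
    using linear_add[OF linear_jump_coeff] by (simp add: edge_avg_poly_def algebra_simps)
  show "edge_avg_poly C i (c *\<^sub>R p) = c *\<^sub>R edge_avg_poly C i p"
    using integral_cmul[of "{0..1}" c "\<lambda>t. peval p (edge_path C i t)"]
      linear_scale[OF linear_jump_coeff]
    by (simp add: edge_avg_poly_def peval_scaleR algebra_simps)
qed

lemma closed_segment_subset_closure:
  fixes A B :: "'a::real_normed_vector"
  assumes "A \<noteq> B" "finite F" "closed_segment A B - F \<subseteq> S"
  shows "closed_segment A B \<subseteq> closure S"
proof
  fix X assume X: "X \<in> closed_segment A B"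
  have "closed_segment A B \<noteq> {Y}" for Y
    using assms(1) ends_in_segment[of A B] by force
  then have "X islimpt closed_segment A B"
    using X by (intro connected_imp_perfect) auto
  then have "X islimpt (F \<union> (closed_segment A B - F))"
    by (rule islimpt_subset) auto
  then have "X islimpt S"
    using islimpt_Un_finite[OF assms(2)] islimpt_subset assms(3) by blast
  then show "X \<in> closure S"
    by (simp add: closure_def)
qed

locale interface_element = cart_element +
  assumes bp_pos: "bp C > 0" and bm_pos: "bm C > 0"
    and open_Om_Pos: "open (Om C Pos)" and open_Om_Neg: "open (Om C Neg)"
    and Om_disjoint: "Om C Pos \<inter> Om C Neg = {}"
    and Tset_cover: "Tset C \<subseteq> Om C Pos \<union> Om C Neg \<union> Gam C"
    and Gam_frontier: "Gam C \<inter> frontier (Tset C) = {Dp C, Ep C}"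
    and D_neq_E: "Dp C \<noteq> Ep C"
    and DE_not_on_one_edge: "\<not> (\<exists>i<NN C. Dp C \<in> edge C i \<and> Ep C \<in> edge C i)"
    and norm_nb: "norm (nb C) = 1" and nb_orthogonal: "nb C \<bullet> (Ep C - Dp C) = 0"
    and sides: "\<exists>\<sigma>::real. \<sigma> \<noteq> 0
      \<and> (\<forall>Q \<in> frontier (Tset C) \<inter> closure (Tsg C Pos). \<sigma> * (nb C \<bullet> (Q - Dp C)) \<ge> 0)
      \<and> (\<forall>Q \<in> frontier (Tset C) \<inter> closure (Tsg C Neg). \<sigma> * (nb C \<bullet> (Q - Dp C)) \<le> 0)"
    and nb_vF_pos: "nb C \<bullet> vF C > 0"
begin

lemma open_Om: "open (Om C s)"
  using open_Om_Pos open_Om_Neg by (cases s) auto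

lemma Tsg_disjoint_closure_opp: "Tsg C s \<inter> closure (Tsg C (opp s)) = {}"
proof -
  have "Om C s \<inter> closure (Om C (opp s)) = {}"
    using Om_disjoint open_Om[of s] by (cases s) (auto simp: open_Int_closure_eq_empty Int_commute)
  then show ?thesis
    using closure_mono[of "Tsg C (opp s)" "Om C (opp s)"] by (auto simp: Tsg_def)
qed

lemma is_ife_piece: "is_ife C q \<Longrightarrow> q s = ife_piece C s (q Pos)"
  using bm_pos nb_vF_pos D_neq_E nb_orthogonal norm_nb by (intro is_ife_eq_ife_piece) auto

lemma nb_inner_on_l: "X \<in> closed_segment (Dp C) (Ep C) \<Longrightarrow> nb C \<bullet> (X - Dp C) = 0"
proof -
  assume "X \<in> closed_segment (Dp C) (Ep C)"
  then obtain u where "X - Dp C = u *\<^sub>R (Ep C - Dp C)"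
    by (auto simp: in_segment algebra_simps)
  then show ?thesis
    using nb_orthogonal by simp
qed

lemma edge_not_on_l:
  assumes i: "i < NN C"
  shows "nb C \<bullet> (V C i - Dp C) \<noteq> 0 \<or> nb C \<bullet> (V C (Suc i) - V C i) \<noteq> 0"
proof (rule ccontr)
  assume "\<not> ?thesis"
  then have A: "nb C \<bullet> (V C i - Dp C) = 0" and AB: "nb C \<bullet> (V C (Suc i) - V C i) = 0"
    by auto
  define k where "k = edge_normal C i \<bullet> nb C"
  have normal: "edge_normal C i = k *\<^sub>R nb C"
    unfolding k_def using edge_normal_orthogonal AB V_neq_V_Suc[of i] norm_nb
    by (intro perp_eq_scaleR_unit) auto
  have "edge_normal C i \<bullet> (P - V C i) = 0" if "nb C \<bullet> (P - Dp C) = 0" for P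
  proof -
    have "nb C \<bullet> (P - V C i) = nb C \<bullet> (P - Dp C) - nb C \<bullet> (V C i - Dp C)"
      by (simp add: inner_diff_right)
    then show ?thesis
      using that A unfolding normal by simp
  qed
  moreover have "Dp C \<in> Tset C" "Ep C \<in> Tset C"
    using Gam_frontier frontier_subset_closed[OF compact_imp_closed[OF compact_Tset]] by blast+
  ultimately have "Dp C \<in> edge C i" "Ep C \<in> edge C i"
    using nb_orthogonal by (auto intro!: on_edge_line_imp_edge[OF i])
  then show False
    using DE_not_on_one_edge i by blast
qed

lemma finite_edge_Int_l:
  assumes i: "i < NN C"
  shows "finite {X \<in> edge C i. nb C \<bullet> (X - Dp C) = 0}"
proof -
  define a where "a = nb C \<bullet> (V C i - Dp C)"
  define c where "c = nb C \<bullet> (V C (Suc i) - V C i)"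
  have "{u. a + u * c = 0} \<subseteq> {- a / c}"
    using edge_not_on_l[OF i] unfolding a_def[symmetric] c_def[symmetric]
    by (cases "c = 0") (auto simp: field_simps)
  then have "finite {u. a + u * c = 0}"
    using finite_subset by blast
  moreover have "{X \<in> edge C i. nb C \<bullet> (X - Dp C) = 0} \<subseteq> edge_path C i ` {u. a + u * c = 0}"
  proof
    fix X assume X: "X \<in> {X \<in> edge C i. nb C \<bullet> (X - Dp C) = 0}"
    then obtain u where u: "X = edge_path C i u"
      unfolding edge_def linepath_image_01[symmetric] by blast
    have "nb C \<bullet> (edge_path C i u - Dp C) = a + u * c"
      by (simp add: a_def c_def linepath_def inner_add_right inner_diff_right algebra_simps)
    then show "X \<in> edge_path C i ` {u. a + u * c = 0}"
      using X u by auto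
  qed
  ultimately show ?thesis
    by (meson finite_imageI finite_subset)
qed

lemma edge_point_in_Tsg:
  assumes "i < NN C" "X \<in> edge C i" "X \<noteq> Dp C" "X \<noteq> Ep C"
  shows "X \<in> Tsg C Pos \<or> X \<in> Tsg C Neg"
proof -
  have "X \<in> Tset C" "X \<notin> Gam C"
    using assms edge_subset_Tset edge_subset_frontier Gam_frontier by blast+
  then show ?thesis
    using Tset_cover by (auto simp: Tsg_def)
qed

lemma Tsg_Neg_frontier_notin_Tp_Pos:
  assumes "\<not> curve C" "X \<in> frontier (Tset C) \<inter> closure (Tsg C Neg)" "nb C \<bullet> (X - Dp C) \<noteq> 0"
  shows "X \<notin> Tp C Pos"
proof
  assume "X \<in> Tp C Pos"
  then obtain Q where Q: "Q \<in> frontier (Tset C) \<inter> closure (Tsg C Pos)"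
    and XQ: "(nb C \<bullet> (X - Dp C)) * (nb C \<bullet> (Q - Dp C)) > 0"
    using assms(1) by (auto simp: Tp_def)
  obtain \<sigma> :: real where "\<sigma> \<noteq> 0"
    and X\<sigma>: "\<sigma> * (nb C \<bullet> (X - Dp C)) \<le> 0" and Q\<sigma>: "\<sigma> * (nb C \<bullet> (Q - Dp C)) \<ge> 0"
    using sides Q assms(2) by blast
  from X\<sigma> Q\<sigma> have "(\<sigma> * (nb C \<bullet> (X - Dp C))) * (\<sigma> * (nb C \<bullet> (Q - Dp C))) \<le> 0"
    by (rule mult_nonpos_nonneg)
  moreover have "\<sigma> * \<sigma> > 0"
    using \<open>\<sigma> \<noteq> 0\<close> by (metis not_real_square_gt_zero)
  then have "(\<sigma> * \<sigma>) * ((nb C \<bullet> (X - Dp C)) * (nb C \<bullet> (Q - Dp C))) > 0"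
    using XQ by (rule mult_pos_pos)
  ultimately show False
    by (simp add: algebra_simps)
qed

text \<open>The exceptional points are $D$, $E$ and the points of the edge on the line of $l$.\<close>

lemma edge_ae_sides:
  assumes i: "i < NN C"
  obtains F where "finite F"
    "\<And>X. X \<in> edge C i - F \<Longrightarrow> X \<in> Tsg C Pos \<inter> Tp C Pos \<or> X \<in> Tsg C Neg - Tp C Pos"
proof
  let ?F = "{Dp C, Ep C} \<union> {X \<in> edge C i. nb C \<bullet> (X - Dp C) = 0}"
  show "finite ?F"
    using finite_edge_Int_l[OF i] by simp
  fix X assume X: "X \<in> edge C i - ?F"
  have front: "X \<in> frontier (Tset C)" "X \<in> Tset C"
    using X edge_subset_frontier[OF i] edge_subset_Tset by blast+
  consider "X \<in> Tsg C Pos" | "X \<in> Tsg C Neg"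
    using edge_point_in_Tsg[OF i] X by blast
  then show "X \<in> Tsg C Pos \<inter> Tp C Pos \<or> X \<in> Tsg C Neg - Tp C Pos"
  proof cases
    case 1
    have "X \<in> frontier (Tset C) \<inter> closure (Tsg C Pos)"
      using 1 front closure_subset by blast
    moreover have "(nb C \<bullet> (X - Dp C)) * (nb C \<bullet> (X - Dp C)) > 0"
      using X by (simp add: zero_less_mult_iff less_le)
    ultimately have "X \<in> Tp C Pos"
      using 1 front(2) unfolding Tp_def by auto
    then show ?thesis
      using 1 by blast
  next
    case 2
    have "X \<notin> Tp C Pos"
    proof (cases "curve C")
      case True
      then show ?thesis
        using 2 Om_disjoint by (auto simp: Tp_def Tsg_def)
    next
      case False
      then show ?thesis
        using 2 X front closure_subset by (intro Tsg_Neg_frontier_notin_Tp_Pos) auto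
    qed
    then show ?thesis
      using 2 by blast
  qed
qed

lemma edge_path_ae_sides:
  assumes i: "i < NN C"
  obtains T0 where "finite T0" "\<And>t. t \<in> {0..1} - T0 \<Longrightarrow>
      edge_path C i t \<in> Tsg C Pos \<inter> Tp C Pos \<or> edge_path C i t \<in> Tsg C Neg - Tp C Pos"
proof -
  obtain F where F: "finite F"
    "\<And>X. X \<in> edge C i - F \<Longrightarrow> X \<in> Tsg C Pos \<inter> Tp C Pos \<or> X \<in> Tsg C Neg - Tp C Pos"
    using edge_ae_sides[OF i] by blast
  show ?thesis
  proof
    show "finite (edge_path C i -` F \<inter> {0..1})"
      using F(1) inj_on_linepath[OF V_neq_V_Suc] by (rule finite_vimage_IntI)
  qed (use F(2) edge_path_in_edge in blast)
qed

lemma integrable_indicator_Tsg_mult: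
  fixes f :: "real \<Rightarrow> real"
  assumes "continuous_on {0..1} f"
  shows "(\<lambda>t. indicator (Tsg C s) (edge_path C i t) * f t) integrable_on {0..1}"
  using integrable_indicator_open_mult[OF open_Om continuous_on_linepath assms]
proof (rule integrable_eq)
  fix t :: real assume "t \<in> {0..1}"
  then have "edge_path C i t \<in> Tset C"
    using edge_path_in_edge edge_subset_Tset by blast
  then show "indicator (Om C s) (edge_path C i t) * f t = indicator (Tsg C s) (edge_path C i t) * f t"
    by (simp add: Tsg_def indicator_def)
qed

lemma edge_avg_ife_fun:
  assumes i: "i < NN C"
  shows "edge_avg C i (ife_fun C q) = integral {0..1} (\<lambda>t. peval (q s) (edge_path C i t))
     + integral {0..1} (\<lambda>t. indicator (Tsg C (opp s)) (edge_path C i t)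
          * (peval (q (opp s)) (edge_path C i t) - peval (q s) (edge_path C i t)))"
proof -
  obtain T0 where T0: "finite T0" "\<And>t. t \<in> {0..1} - T0 \<Longrightarrow>
      edge_path C i t \<in> Tsg C Pos \<inter> Tp C Pos \<or> edge_path C i t \<in> Tsg C Neg - Tp C Pos"
    using edge_path_ae_sides[OF i] by blast
  have "ife_fun C q (edge_path C i t) = peval (q s) (edge_path C i t)
     + indicator (Tsg C (opp s)) (edge_path C i t)
          * (peval (q (opp s)) (edge_path C i t) - peval (q s) (edge_path C i t))"
    if "t \<in> {0..1} - T0" for t
    using T0(2)[OF that] Om_disjoint by (cases s) (auto simp: ife_fun_def indicator_def Tsg_def)
  then have "edge_avg C i (ife_fun C q) = integral {0..1} (\<lambda>t. peval (q s) (edge_path C i t)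
     + indicator (Tsg C (opp s)) (edge_path C i t)
          * (peval (q (opp s)) (edge_path C i t) - peval (q s) (edge_path C i t)))"
    unfolding edge_avg_eq_integral by (intro integral_spike[OF negligible_finite[OF T0(1)]]) simp
  also have "\<dots> = integral {0..1} (\<lambda>t. peval (q s) (edge_path C i t))
     + integral {0..1} (\<lambda>t. indicator (Tsg C (opp s)) (edge_path C i t)
          * (peval (q (opp s)) (edge_path C i t) - peval (q s) (edge_path C i t)))"
    by (intro integral_add integrable_continuous_real integrable_indicator_Tsg_mult continuous_intros)
  finally show ?thesis .
qed

lemma edge_avg_ife_fun_eq_edge_avg_poly:
  assumes "i < NN C" "is_ife C q"
  shows "edge_avg C i (ife_fun C q) = edge_avg_poly C i (q Pos)"
proof -
  have "peval (q Neg) X - peval (q Pos) X = jump_coeff C (q Pos) * (nb C \<bullet> (X - Dp C))" for X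
    using is_ife_piece[OF assms(2), of Neg] by (simp add: ife_piece_def peval_add peval_scaleR)
  then show ?thesis
    using edge_avg_ife_fun[OF assms(1), of q Pos]
    by (simp add: edge_avg_poly_def side_moment_def mult.left_commute)
qed

lemma Iint_disjoint_Iset: "i \<in> Iint C \<Longrightarrow> i \<notin> Iset C s"
proof
  assume "i \<in> Iint C" "i \<in> Iset C s"
  then obtain X where "X \<in> edge C i" "X \<in> Tsg C (opp s)" "edge C i \<subseteq> closure (Tsg C s)"
    by (cases s) (auto simp: Iint_def Iset_def)
  then show False
    using Tsg_disjoint_closure_opp[of "opp s"] by auto
qed

lemma side_moment_Iset:
  assumes I: "i \<in> Iset C (opp s)"
  shows "side_moment C s i = nb C \<bullet> (mid C i - Dp C)"
proof -
  have i: "i < NN C"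
    using I by (simp add: Iset_def)
  obtain T0 where T0: "finite T0" "\<And>t. t \<in> {0..1} - T0 \<Longrightarrow>
      edge_path C i t \<in> Tsg C Pos \<inter> Tp C Pos \<or> edge_path C i t \<in> Tsg C Neg - Tp C Pos"
    using edge_path_ae_sides[OF i] by blast
  have in_opp: "edge_path C i t \<in> Tsg C (opp s)" if t: "t \<in> {0..1} - T0" for t
  proof -
    have "edge_path C i t \<in> closure (Tsg C (opp s))"
      using I edge_path_in_edge t by (auto simp: Iset_def)
    then have "edge_path C i t \<notin> Tsg C s"
      using Tsg_disjoint_closure_opp[of s] by blast
    then show ?thesis
      using T0(2)[OF t] by (cases s) auto
  qed
  have "side_moment C s i = integral {0..1} (\<lambda>t. peval (lin_poly (nb C) (Dp C)) (edge_path C i t))"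
    unfolding side_moment_def
    by (rule integral_spike[OF negligible_finite[OF T0(1)]]) (use in_opp in simp)
  also have "\<dots> = nb C \<bullet> (mid C i - Dp C)"
    by (simp only: integral_lin_poly_linepath mid_def)
  finally show ?thesis .
qed

lemma side_moment_eq_0:
  assumes i: "i < NN C" and notI: "i \<notin> Iset C (opp s)" "i \<notin> Iint C"
  shows "side_moment C s i = 0"
proof -
  have disjoint: "edge C i \<inter> Tsg C (opp s) = {}"
  proof (rule ccontr)
    assume "edge C i \<inter> Tsg C (opp s) \<noteq> {}"
    then have no_s: "edge C i \<inter> Tsg C s = {}"
      using notI(2) i by (cases s) (auto simp: Iint_def)
    obtain F where F: "finite F"
      "\<And>X. X \<in> edge C i - F \<Longrightarrow> X \<in> Tsg C Pos \<inter> Tp C Pos \<or> X \<in> Tsg C Neg - Tp C Pos"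
      using edge_ae_sides[OF i] by blast
    have "edge C i - F \<subseteq> Tsg C (opp s)"
      using F(2) no_s by (cases s) auto
    then have "edge C i \<subseteq> closure (Tsg C (opp s))"
      unfolding edge_def using V_neq_V_Suc F(1) by (rule closed_segment_subset_closure[rotated 2])
    then show False
      using notI(1) i by (simp add: Iset_def)
  qed
  have "side_moment C s i = integral {0..1} (\<lambda>t::real. 0::real)"
    unfolding side_moment_def
    by (rule integral_cong) (use disjoint edge_path_in_edge in \<open>auto simp: indicator_def\<close>)
  then show ?thesis
    by simp
qed

text \<open>The $s$-piece of \<open>coord_ife s k\<close> is the $k$-th coordinate of $X - D$, and its jump
  $c_s v_k\,\bar{\mathbf n}\cdot(X-D)$ across $l$ is what (J2) demands.\<close>

definition coord_ife :: "sgn \<Rightarrow> 2 \<Rightarrow> sgn \<Rightarrow> poly2" where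
  "coord_ife s k = (\<lambda>r. if r = s then lin_poly (axis k 1) (Dp C)
      else lin_poly (axis k 1 + (mbar_coeff C s * vF C $ k) *\<^sub>R nb C) (Dp C))"

lemma axis_inner_real2: "axis k 1 \<bullet> (v::real^2) = v $ k"
proof -
  have "\<forall>k::2. axis k 1 \<bullet> v = v $ k"
    by (simp add: forall_2 inner_real2 axis_def)
  then show ?thesis
    by blast
qed

lemma is_ife_coord_ife: "is_ife C (coord_ife s k)"
proof -
  have J1: "peval (coord_ife s k Neg) X = peval (coord_ife s k Pos) X"
    if "X \<in> closed_segment (Dp C) (Ep C)" for X
    using nb_inner_on_l[OF that] by (cases s) (simp_all add: coord_ife_def inner_add_left)
  have "bm C * (pgrad (coord_ife s k Neg) (Fp C) \<bullet> vF C) = bp C * (pgrad (coord_ife s k Pos) (Fp C) \<bullet> vF C)"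
    using nb_vF_pos bm_pos bp_pos
    by (cases s) (simp_all add: coord_ife_def inner_add_left axis_inner_real2 mbar_coeff_def
        beta_ratio_def field_simps)
  then show ?thesis
    using J1 by (simp add: is_ife_def coord_ife_def)
qed

lemma edge_avg_coord_ife:
  assumes j: "j < NN C"
  shows "edge_avg C j (ife_fun C (coord_ife s k))
       = (mid C j - Dp C) $ k + mbar_coeff C s * side_moment C s j * vF C $ k"
proof -
  have "peval (coord_ife s k (opp s)) X - peval (coord_ife s k s) X
      = mbar_coeff C s * vF C $ k * (nb C \<bullet> (X - Dp C))" for X
    by (cases s) (simp_all add: coord_ife_def inner_add_left)
  moreover have "coord_ife s k s = lin_poly (axis k 1) (Dp C)"
    by (simp add: coord_ife_def)
  then have "integral {0..1} (\<lambda>t. peval (coord_ife s k s) (edge_path C j t)) = (mid C j - Dp C) $ k"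
    by (simp only: integral_lin_poly_linepath mid_def axis_inner_real2)
  ultimately show ?thesis
    using edge_avg_ife_fun[OF j, of "coord_ife s k" s]
    by (simp add: side_moment_def mult.left_commute)
qed

lemma edge_avg_Mbar_side:
  assumes "Xb \<in> closed_segment (Dp C) (Ep C)"
  shows "(1 / elen C i) *\<^sub>R seg_int (V C i) (V C (Suc i))
          (\<lambda>P. (indicator (Tsg C (opp s)) P :: real) *\<^sub>R (transpose (Mbar C s - mat 1) *v (P - Xb)))
       = (mbar_coeff C s * side_moment C s i) *\<^sub>R vF C"
proof -
  have "nb C \<bullet> (P - Xb) = nb C \<bullet> (P - Dp C)" for P
    using nb_inner_on_l[OF assms] by (simp add: inner_diff_right)
  then have "transpose (Mbar C s - mat 1) *v (P - Xb) = (mbar_coeff C s * (nb C \<bullet> (P - Dp C))) *\<^sub>R vF C" for P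
    using transpose_Mbar_minus_id[of C s "P - Xb"] nb_vF_pos by simp
  then have integrand: "(indicator (Tsg C (opp s)) P :: real) *\<^sub>R (transpose (Mbar C s - mat 1) *v (P - Xb))
      = (mbar_coeff C s * (indicator (Tsg C (opp s)) P * (nb C \<bullet> (P - Dp C)))) *\<^sub>R vF C" for P
    by (simp add: mult.left_commute)
  have "(\<lambda>t. indicator (Tsg C (opp s)) (edge_path C i t) * (nb C \<bullet> (edge_path C i t - Dp C)))
      integrable_on {0..1}"
    by (intro integrable_indicator_Tsg_mult continuous_intros)
  then have "(\<lambda>t. mbar_coeff C s * (indicator (Tsg C (opp s)) (edge_path C i t)
      * (nb C \<bullet> (edge_path C i t - Dp C)))) integrable_on {0..1}"
    by (rule integrable_on_mult_right)
  from has_integral_scaleR_left[OF integrable_integral[OF this], of "vF C"]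
  show ?thesis
    using elen_pos[of i] unfolding integrand seg_int_linepath
    by (simp add: integral_unique side_moment_def elen_def)
qed

end

subsection \<open>Unisolvence of the edge averages\<close>

definition edge_avg_vec :: "cfg \<Rightarrow> poly2 \<Rightarrow> poly2" where
  "edge_avg_vec C p = (edge_avg_poly C 0 p, edge_avg_poly C 1 p, edge_avg_poly C 2 p,
     if rect C then edge_avg_poly C 3 p else pdxx p)"

lemma linear_edge_avg_vec: "linear (edge_avg_vec C)"
  using linear_edge_avg_poly[of C]
  by (intro linearI) (simp_all add: edge_avg_vec_def linear_add linear_scale pdxx_add pdxx_scaleR)

text \<open>On a triangle the fourth coordinate records the $x^2-y^2$ part, which vanishes on $\Pi_T$.\<close>

lemma edge_avg_vec_eqI:
  assumes "\<And>j. j < NN C \<Longrightarrow> edge_avg_poly C j p = edge_avg_poly C j q"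
    and "\<not> rect C \<Longrightarrow> pdxx p = pdxx q"
  shows "edge_avg_vec C p = edge_avg_vec C q"
  using assms(1)[of 0] assms(1)[of 1] assms(1)[of 2] assms(1)[of 3] assms(2)
  by (simp add: edge_avg_vec_def NN_def)

locale ife_basis = interface_element +
  fixes phi :: "nat \<Rightarrow> sgn \<Rightarrow> poly2"
  assumes phi_ife: "\<And>i. i < NN C \<Longrightarrow> is_ife C (phi i)"
    and phi_dual: "\<And>i j. i < NN C \<Longrightarrow> j < NN C \<Longrightarrow>
      edge_avg C j (ife_fun C (phi i)) = (if i = j then 1 else 0)"
begin

lemma edge_avg_poly_phi:
  "i < NN C \<Longrightarrow> j < NN C \<Longrightarrow> edge_avg_poly C j (phi i Pos) = (if i = j then 1 else 0)"
  using phi_dual phi_ife edge_avg_ife_fun_eq_edge_avg_poly by simp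

lemma pdxx_phi: "\<not> rect C \<Longrightarrow> i < NN C \<Longrightarrow> pdxx (phi i Pos) = 0"
  using phi_ife by (auto simp: is_ife_def intro: pdxx_PiT)

lemma edge_avg_poly_sum_phi:
  assumes "j < NN C"
  shows "edge_avg_poly C j (\<Sum>i<NN C. c i *\<^sub>R phi i Pos) = c j"
proof -
  have "edge_avg_poly C j (\<Sum>i<NN C. c i *\<^sub>R phi i Pos) = (\<Sum>i<NN C. c i * (if i = j then 1 else 0))"
    using linear_edge_avg_poly[of C j] edge_avg_poly_phi assms
    by (simp add: linear_sum linear_scale)
  also have "\<dots> = c j"
    using assms by (simp add: if_distrib cong: if_cong)
  finally show ?thesis .
qed

lemma pdxx_sum_phi: "\<not> rect C \<Longrightarrow> pdxx (\<Sum>i<NN C. c i *\<^sub>R phi i Pos) = 0"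
  using linear_pdxx pdxx_phi by (simp add: linear_sum linear_scale)

lemma surj_edge_avg_vec: "surj (edge_avg_vec C)"
proof -
  have "y \<in> range (edge_avg_vec C)" for y
  proof -
    obtain y0 y1 y2 y3 where y: "y = (y0, y1, y2, y3)"
      by (cases y) auto
    show ?thesis
    proof (cases "rect C")
      case True
      let ?c = "\<lambda>i. [y0, y1, y2, y3] ! i"
      have "edge_avg_vec C (\<Sum>i<NN C. ?c i *\<^sub>R phi i Pos) = y"
        using True edge_avg_poly_sum_phi[of _ ?c] by (simp add: y edge_avg_vec_def NN_def)
      then show ?thesis
        by (metis rangeI)
    next
      case False
      define e :: poly2 where "e = (0, 0, 0, 1 / 2)"
      define p where "p = e - (\<Sum>i<NN C. edge_avg_poly C i e *\<^sub>R phi i Pos)"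
      have avg_p: "edge_avg_poly C j p = 0" if "j < NN C" for j
        using that linear_edge_avg_poly[of C j] edge_avg_poly_sum_phi
        by (simp add: p_def linear_diff)
      have "pdxx e = 1"
        by (simp add: e_def pdxx_def)
      then have pdxx_p: "pdxx p = 1"
        using False linear_diff[OF linear_pdxx] pdxx_sum_phi by (simp add: p_def)
      let ?c = "\<lambda>i. [y0, y1, y2] ! i"
      let ?r = "(\<Sum>i<NN C. ?c i *\<^sub>R phi i Pos) + y3 *\<^sub>R p"
      have "edge_avg_poly C j ?r = ?c j" if "j < NN C" for j
        using that linear_edge_avg_poly[of C j] edge_avg_poly_sum_phi avg_p
        by (simp add: linear_add linear_scale)
      moreover have "pdxx ?r = y3"
        using False pdxx_sum_phi pdxx_p by (simp add: pdxx_add pdxx_scaleR)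
      ultimately have "edge_avg_vec C ?r = y"
        using False by (simp add: y edge_avg_vec_def NN_def)
      then show ?thesis
        by (metis rangeI)
    qed
  qed
  then show ?thesis
    by blast
qed

lemma inj_edge_avg_vec: "inj (edge_avg_vec C)"
  by (rule linear_surj_imp_inj[OF linear_edge_avg_vec surj_edge_avg_vec])

lemma ife_interpolation:
  assumes q: "is_ife C q"
  shows "q s = (\<Sum>i<NN C. edge_avg C i (ife_fun C q) *\<^sub>R phi i s)"
proof -
  let ?c = "\<lambda>i. edge_avg C i (ife_fun C q)"
  have "edge_avg_vec C (q Pos) = edge_avg_vec C (\<Sum>i<NN C. ?c i *\<^sub>R phi i Pos)"
  proof (rule edge_avg_vec_eqI)
    show "edge_avg_poly C j (q Pos) = edge_avg_poly C j (\<Sum>i<NN C. ?c i *\<^sub>R phi i Pos)" if "j < NN C" for j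
      using that q by (simp add: edge_avg_poly_sum_phi edge_avg_ife_fun_eq_edge_avg_poly)
    have "q Pos \<in> PiT (rect C)"
      using q by (simp add: is_ife_def)
    then show "\<not> rect C \<Longrightarrow> pdxx (q Pos) = pdxx (\<Sum>i<NN C. ?c i *\<^sub>R phi i Pos)"
      using pdxx_sum_phi pdxx_PiT by simp
  qed
  then have "q Pos = (\<Sum>i<NN C. ?c i *\<^sub>R phi i Pos)"
    using inj_edge_avg_vec by (simp add: inj_eq)
  then have "q s = ife_piece C s (\<Sum>i<NN C. ?c i *\<^sub>R phi i Pos)"
    using is_ife_piece[OF q, of s] by simp
  also have "\<dots> = (\<Sum>i<NN C. ?c i *\<^sub>R ife_piece C s (phi i Pos))"
    using linear_ife_piece[of C s] by (simp add: linear_sum linear_scale)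
  also have "\<dots> = (\<Sum>i<NN C. ?c i *\<^sub>R phi i s)"
    by (intro sum.cong refl) (metis is_ife_piece phi_ife lessThan_iff)
  finally show ?thesis .
qed

lemma sum_phi_eq_1: "(\<Sum>i<NN C. peval (phi i s) X) = 1"
proof -
  let ?one = "\<lambda>_::sgn. (1::real, 0::real, 0::real, 0::real)"
  have "pgrad (1, 0, 0, 0) Y = 0" for Y
    by (simp add: pgrad_def vec2_eq_iff)
  then have one: "is_ife C ?one"
    by (simp add: is_ife_def PiT_def pdxx_def)
  have "edge_avg C j (ife_fun C ?one) = 1" for j
    by (simp add: edge_avg_eq_integral ife_fun_def peval_def)
  then have "(\<Sum>i<NN C. peval (phi i s) X) = peval (?one s) X"
    using ife_interpolation[OF one, of s] by (simp add: peval_sum)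
  also have "\<dots> = 1"
    by (simp add: peval_def)
  finally show ?thesis .
qed

lemma X_minus_D_expansion:
  "X - Dp C = (\<Sum>i<NN C. peval (phi i s) X *\<^sub>R
      (mid C i - Dp C + (mbar_coeff C s * side_moment C s i) *\<^sub>R vF C))"
proof -
  have "(X - Dp C) $ k = (\<Sum>i<NN C. peval (phi i s) X *
      ((mid C i - Dp C) $ k + mbar_coeff C s * side_moment C s i * vF C $ k))" for k
  proof -
    have "(X - Dp C) $ k = peval (coord_ife s k s) X"
      by (simp add: coord_ife_def axis_inner_real2)
    also have "\<dots> = (\<Sum>i<NN C. edge_avg C i (ife_fun C (coord_ife s k)) * peval (phi i s) X)"
      by (subst ife_interpolation[OF is_ife_coord_ife]) (simp add: peval_sum peval_scaleR)
    also have "\<dots> = (\<Sum>i<NN C. peval (phi i s) X *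
        ((mid C i - Dp C) $ k + mbar_coeff C s * side_moment C s i * vF C $ k))"
      by (rule sum.cong[OF refl]) (simp add: edge_avg_coord_ife)
    finally show ?thesis .
  qed
  then show ?thesis
    by (simp add: vec_eq_iff sum_component algebra_simps)
qed

lemma Lam_s_eq_0:
  assumes Xb: "\<And>i. i < NN C \<Longrightarrow> Xb i \<in> closed_segment (Dp C) (Ep C)"
  shows "Lam_s C phi Xb s X = 0"
proof -
  let ?p = "\<lambda>i. peval (phi i s) X"
  let ?f = "\<lambda>i. ?p i *\<^sub>R ((mbar_coeff C s * side_moment C s i) *\<^sub>R vF C)"
  have sets: "Iset C (opp s) \<subseteq> {..<NN C}" "Iint C \<subseteq> {..<NN C}"
    by (auto simp: Iset_def Iint_def)
  have Iset_terms: "?p i *\<^sub>R (transpose (Mbar C s - mat 1) *v (mid C i - Xb i)) = ?f i"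
    if "i \<in> Iset C (opp s)" for i
  proof -
    have "nb C \<bullet> (mid C i - Xb i) = side_moment C s i"
      using nb_inner_on_l[OF Xb] sets that side_moment_Iset[OF that] by (auto simp: inner_diff_right)
    then show ?thesis
      using transpose_Mbar_minus_id[of C s "mid C i - Xb i"] nb_vF_pos by simp
  qed
  have "(\<Sum>i\<in>Iset C (opp s). ?f i) + (\<Sum>i\<in>Iint C. ?f i) = (\<Sum>i\<in>Iset C (opp s) \<union> Iint C. ?f i)"
    using sets Iint_disjoint_Iset by (intro sum.union_disjoint[symmetric]) (auto dest: finite_subset)
  also have "\<dots> = (\<Sum>i<NN C. ?f i)"
    using sets side_moment_eq_0 by (intro sum.mono_neutral_left) auto
  finally have "Lam_s C phi Xb s X = (\<Sum>i<NN C. ?p i *\<^sub>R (mid C i - X)) + (\<Sum>i<NN C. ?f i)"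
    unfolding Lam_s_def using sets Xb Iset_terms edge_avg_Mbar_side by (simp add: add.assoc subset_iff)
  also have "(\<Sum>i<NN C. ?p i *\<^sub>R (mid C i - X))
      = (\<Sum>i<NN C. ?p i *\<^sub>R (mid C i - Dp C)) - (\<Sum>i<NN C. ?p i) *\<^sub>R (X - Dp C)"
    by (simp add: scaleR_sum_left sum_subtractf[symmetric] algebra_simps)
  also have "\<dots> = (X - Dp C) - (\<Sum>i<NN C. ?f i) - (X - Dp C)"
    by (subst (2) X_minus_D_expansion[of _ s])
      (simp add: sum_phi_eq_1 scaleR_add_right sum.distrib)
  finally show ?thesis
    by simp
qed

lemma Lam_eq_0:
  "(\<And>i. i < NN C \<Longrightarrow> Xb i \<in> closed_segment (Dp C) (Ep C)) \<Longrightarrow> Lam C phi Xb X = 0"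
  by (simp add: Lam_def Lam_s_eq_0)

end

theorem mainTheorem9:
  fixes C :: cfg
    and \<gamma> \<gamma>' \<gamma>'' :: "real \<Rightarrow> real^2" and t0 :: real
    and phi :: "nat \<Rightarrow> sgn \<Rightarrow> poly2" and Xb :: "nat \<Rightarrow> real^2"
  assumes elem: "hx C > 0" "hy C > 0" "cutc C < 4"
    and beta: "bp C > 0" "bm C > 0"
    and opens: "open (Om C Pos)" "open (Om C Neg)"
    and disj: "Om C Pos \<inter> Om C Neg = {}" "Gam C \<inter> Om C Pos = {}" "Gam C \<inter> Om C Neg = {}"
    and separ: "Gam C \<subseteq> frontier (Om C Pos) \<inter> frontier (Om C Neg)"
    and cover: "Tset C \<subseteq> Om C Pos \<union> Om C Neg \<union> Gam C"
    and interface: "Gam C \<inter> interior (Tset C) \<noteq> {}"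
    and DE: "Gam C \<inter> frontier (Tset C) = {Dp C, Ep C}" "Dp C \<noteq> Ep C"
    and H2: "\<not> (\<exists>i<NN C. Dp C \<in> edge C i \<and> Ep C \<in> edge C i)"
    and H3: "Gam C \<inter> Tset C = \<gamma> ` {0..1}" "\<gamma> 0 = Dp C" "\<gamma> 1 = Ep C" "inj_on \<gamma> {0..1}"
      "\<forall>t\<in>{0..1}. (\<gamma> has_vector_derivative \<gamma>' t) (at t within {0..1})
                 \<and> (\<gamma>' has_vector_derivative \<gamma>'' t) (at t within {0..1}) \<and> \<gamma>' t \<noteq> 0"
      "continuous_on {0..1} \<gamma>''"
    and nbar: "norm (nb C) = 1" "nb C \<bullet> (Ep C - Dp C) = 0"
    and sides: "\<exists>\<sigma>::real. \<sigma> \<noteq> 0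
      \<and> (\<forall>Q \<in> frontier (Tset C) \<inter> closure (Tsg C Pos). \<sigma> * (nb C \<bullet> (Q - Dp C)) \<ge> 0)
      \<and> (\<forall>Q \<in> frontier (Tset C) \<inter> closure (Tsg C Neg). \<sigma> * (nb C \<bullet> (Q - Dp C)) \<le> 0)"
    and variant: "if curve C
      then Fp C = \<gamma> t0 \<and> 0 < t0 \<and> t0 < 1 \<and> norm (vF C) = 1 \<and> vF C \<bullet> \<gamma>' t0 = 0
           \<and> nb C \<bullet> vF C > 0
      else Fp C \<in> closed_segment (Dp C) (Ep C) \<and> vF C = nb C"
    and basis: "\<forall>i<NN C. is_ife C (phi i)"
      "\<forall>i<NN C. \<forall>j<NN C. edge_avg C j (ife_fun C (phi i)) = (if i = j then 1 else 0)"
    and Xbar: "\<forall>i<NN C. Xb i \<in> closed_segment (Dp C) (Ep C)"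
  shows "(\<forall>k::2. Sint C (\<lambda>X. Lam C phi Xb X $ k))
       \<and> (\<forall>i<NN C. seg_int (V C i) (V C (Suc i)) (Lam C phi Xb) = 0)"
proof -
  have "nb C \<bullet> vF C > 0"
    using variant nbar(1) by (cases "curve C") (auto simp: norm_eq_1)
  then interpret ife_basis C phi
    using elem beta opens disj(1) cover DE H2 nbar sides basis by unfold_locales auto
  have Lam_0: "Lam C phi Xb = (\<lambda>X. 0)"
    using Xbar Lam_eq_0 by auto
  have "pgrad (0, 0, 0, 0) X = 0" for X
    by (simp add: pgrad_def vec2_eq_iff)
  then have "is_ife C (\<lambda>_. (0, 0, 0, 0))"
    by (simp add: is_ife_def PiT_def pdxx_def)
  then have "Sint C (\<lambda>X. Lam C phi Xb X $ k)" for k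
    unfolding Sint_def Lam_0 by (intro exI[of _ "\<lambda>_. (0, 0, 0, 0)"]) (simp add: peval_def)
  moreover have "seg_int (V C i) (V C (Suc i)) (Lam C phi Xb) = 0" for i
    by (simp add: Lam_0 seg_int_def)
  ultimately show ?thesis
    by blast
qed

end
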